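(* For $0<\theta<\pi$ and $\epsilon>0$ let $\Gamma_\theta=\{re^{i\alpha}: r>0,\ \pi-\theta<\alpha<\pi+\theta\}$ and $\Gamma_\theta^\epsilon=\Gamma_\theta\cap\{|z|<\epsilon\}$. Let $0<\theta_1<\theta_2<\pi$ and let $z_j=r_je^{i(\pi+\alpha_j)}$ with $r_j>0$, $-\theta_1<\alpha_j<\theta_1$, be a sequence with $z_j\to0$ and $\alpha_j\to\alpha$ where $|\alpha|<\theta_1$. Then for any $\epsilon_1,\epsilon_2>0$, $$\lim_{j\to\infty}\frac{M_{\Gamma^{\epsilon_1}_{\theta_1}}(z_j)}{M_{\Gamma^{\epsilon_2}_{\theta_2}}(z_j)}=\left(\frac{\theta_2\cos\frac{\alpha\pi}{2\theta_2}}{\theta_1\cos\frac{\alpha\pi}{2\theta_1}}\right)^2,$$ where $M$ denotes either the Eisenman-Kobayashi measure $M^E$ or the Carathéodory measure $M^C$ (in dimension one).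
   Context: Let $\Delta$ be the unit disc, $\Delta^n$ the unit polydisc, and $H(D_1,D_2)$ the holomorphic maps $D_1\to D_2$; $f'(z)$ denotes the complex Jacobian matrix. For a bounded domain $D\subset\mathbb{C}^n$, the Eisenman-Kobayashi measure is $M^E_D(z)=\inf\{|\det f'(0)|^{-2}: f\in H(\Delta^n,D), f(0)=z\}$ and the Carathéodory measure is $M^C_D(z)=\sup\{|\det f'(z)|^2: f\in H(D,\Delta^n), f(z)=0\}$. *)

theory Defs
  imports "HOL-Complex_Analysis.Complex_Analysis"
begin

text \<open>Maps with f'(0) = 0 would contribute the value +infinity, which never affects the
  infimum, so they are excluded (in HOL inverse 0 = 0).\<close>
definition EK_measure :: "complex set \<Rightarrow> complex \<Rightarrow> real" where
  "EK_measure D z = Inf {(cmod (deriv f 0)) powi (-2) | f.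
       f holomorphic_on ball 0 1 \<and> f ` ball 0 1 \<subseteq> D \<and> f 0 = z \<and> deriv f 0 \<noteq> 0}"

definition Car_measure :: "complex set \<Rightarrow> complex \<Rightarrow> real" where
  "Car_measure D z = Sup {(cmod (deriv f z))^2 | f.
       f holomorphic_on D \<and> f ` D \<subseteq> ball 0 1 \<and> f z = 0}"

definition sector :: "real \<Rightarrow> complex set" where
  "sector \<theta> = {complex_of_real r * exp (\<i> * complex_of_real a) | r a.
       r > 0 \<and> pi - \<theta> < a \<and> a < pi + \<theta>}"

definition trunc_sector :: "real \<Rightarrow> real \<Rightarrow> complex set" where
  "trunc_sector \<theta> \<epsilon> = sector \<theta> \<inter> ball 0 \<epsilon>"

end

theory Submission
  imports Defs
begin

text \<open>With p = pi / (2 theta), the map P(x) = (-x) powr p carries the sector Gamma_theta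
  biholomorphically onto the right half-plane H. Following P by the Cayley map of H that sends
  w0 = P(z) to 0 gives a Caratheodory competitor on the truncated sector with
  |f'(z)| = |P'(z)| / (2 Re w0) = p / (2 r cos (p a)), the value for the full sector.
  Conversely, the disc with centre and radius epsilon powr p / 2 lies in
  H \<inter> ball 0 (epsilon powr p), the image of the truncated sector under P; a Moebius
  parametrisation of this disc through w0, followed by the inverse of P, is an
  Eisenman-Kobayashi competitor that loses only the factor
  (cos (p a) / (cos (p a) - (r / epsilon) powr p))^2, which tends to 1 at the vertex.
  Since Schwarz's lemma gives M^C <= M^E, both measures of the truncated sector are asymptotic
  to (p / (2 r cos (p a)))^2, and the limit of the quotient is the quotient of these values
  for theta1 and theta2.\<close>

section \<open>Sectors\<close>

lemma minus_polar_eq_exp: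
  assumes "r > 0"
  shows "-(complex_of_real r * exp (\<i> * complex_of_real (pi + a))) = exp (Complex (ln r) a)"
proof -
  have "Complex (ln r) a = complex_of_real (ln r) + \<i> * complex_of_real a"
    by (simp add: complex_eq_iff)
  then have "exp (Complex (ln r) a) = complex_of_real r * exp (\<i> * complex_of_real a)"
    using assms by (simp add: exp_add exp_of_real)
  moreover have "exp (\<i> * complex_of_real (pi + a)) = - exp (\<i> * complex_of_real a)"
    by (simp add: distrib_left exp_add)
  ultimately show ?thesis by simp
qed

lemma Ln_minus_polar:
  assumes "r > 0" "-pi < a" "a \<le> pi"
  shows "Ln (-(complex_of_real r * exp (\<i> * complex_of_real (pi + a)))) = Complex (ln r) a"
  unfolding minus_polar_eq_exp[OF assms(1)] using assms by (intro Ln_exp) auto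

lemma polar_mem_sector:
  assumes "r > 0" "\<bar>a\<bar> < \<theta>"
  shows "complex_of_real r * exp (\<i> * complex_of_real (pi + a)) \<in> sector \<theta>"
  unfolding sector_def using assms by (intro CollectI exI[of _ r] exI[of _ "pi + a"]) auto

lemma mem_sector_iff:
  assumes "0 < \<theta>" "\<theta> < pi"
  shows "z \<in> sector \<theta> \<longleftrightarrow> z \<noteq> 0 \<and> \<bar>Im (Ln (-z))\<bar> < \<theta>"
proof
  assume "z \<in> sector \<theta>"
  then obtain r b where rb: "r > 0" "pi - \<theta> < b" "b < pi + \<theta>"
    and z: "z = complex_of_real r * exp (\<i> * complex_of_real b)"
    unfolding sector_def by blast
  then have "Ln (-z) = Complex (ln r) (b - pi)"
    using assms Ln_minus_polar[of r "b - pi"] by simp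
  with rb z show "z \<noteq> 0 \<and> \<bar>Im (Ln (-z))\<bar> < \<theta>"
    by simp
next
  assume z: "z \<noteq> 0 \<and> \<bar>Im (Ln (-z))\<bar> < \<theta>"
  define L where "L = Ln (-z)"
  have "exp L = -z"
    using z by (simp add: L_def)
  then have "z = - exp (Complex (ln (exp (Re L))) (Im L))"
    by simp
  then have "z = complex_of_real (exp (Re L)) * exp (\<i> * complex_of_real (pi + Im L))"
    using minus_polar_eq_exp[of "exp (Re L)" "Im L"] by (metis exp_gt_zero minus_minus)
  moreover have "complex_of_real (exp (Re L)) * exp (\<i> * complex_of_real (pi + Im L)) \<in> sector \<theta>"
    using z by (intro polar_mem_sector) (auto simp: L_def)
  ultimately show "z \<in> sector \<theta>"
    by simp
qed

lemma minus_sector_notin_nonpos_Reals: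
  assumes "0 < \<theta>" "\<theta> < pi" "z \<in> sector \<theta>"
  shows "-z \<notin> \<real>\<^sub>\<le>\<^sub>0"
proof
  assume "-z \<in> \<real>\<^sub>\<le>\<^sub>0"
  moreover have "z \<noteq> 0" "\<bar>Im (Ln (-z))\<bar> < \<theta>"
    using assms by (auto simp: mem_sector_iff)
  ultimately have "Im (Ln (-z)) = pi"
    by (subst Im_Ln_eq_pi) (auto simp: complex_nonpos_Reals_iff complex_eq_iff)
  with \<open>\<bar>Im (Ln (-z))\<bar> < \<theta>\<close> assms show False by simp
qed

lemma open_sector:
  assumes "0 < \<theta>" "\<theta> < pi"
  shows "open (sector \<theta>)"
proof -
  define S :: "complex set" where "S = uminus -` (- \<real>\<^sub>\<le>\<^sub>0)"
  have "open S"
    unfolding S_def by (intro open_vimage continuous_intros) (simp add: open_Compl)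
  moreover have "continuous_on S (\<lambda>z. Im (Ln (-z)))"
    unfolding S_def by (intro continuous_intros) auto
  ultimately have "open (S \<inter> (\<lambda>z. Im (Ln (-z))) -` {-\<theta><..<\<theta>})"
    by (intro continuous_open_preimage) auto
  moreover have "S \<inter> (\<lambda>z. Im (Ln (-z))) -` {-\<theta><..<\<theta>} = sector \<theta>"
    using mem_sector_iff[OF assms] minus_sector_notin_nonpos_Reals[OF assms]
    unfolding S_def by (auto simp: abs_less_iff)
  ultimately show ?thesis by simp
qed

lemma open_trunc_sector:
  assumes "0 < \<theta>" "\<theta> < pi"
  shows "open (trunc_sector \<theta> \<epsilon>)"
  unfolding trunc_sector_def using open_sector[OF assms] by auto

lemma cos_sector_angle_pos:
  assumes "0 < \<theta>" "\<bar>x\<bar> < \<theta>"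
  shows "cos (pi / (2 * \<theta>) * x) > 0"
proof -
  have "\<bar>pi / (2 * \<theta>) * x\<bar> = pi / (2 * \<theta>) * \<bar>x\<bar>"
    using assms by (simp add: abs_mult)
  also have "\<dots> < pi / (2 * \<theta>) * \<theta>"
    using assms by (intro mult_strict_left_mono) auto
  also have "\<dots> = pi / 2" using assms by simp
  finally show ?thesis by (intro cos_gt_zero_pi) arith+
qed

section \<open>The power map onto the right half-plane\<close>

definition sector_power :: "real \<Rightarrow> complex \<Rightarrow> complex" where
  "sector_power \<theta> x = exp (complex_of_real (pi / (2 * \<theta>)) * Ln (-x))"

definition sector_root :: "real \<Rightarrow> complex \<Rightarrow> complex" where
  "sector_root \<theta> w = - exp (Ln w / complex_of_real (pi / (2 * \<theta>)))"

lemma sector_power_polar: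
  assumes "0 < \<theta>" "\<theta> < pi" "r > 0" "\<bar>a\<bar> < \<theta>"
    and z: "z = complex_of_real r * exp (\<i> * complex_of_real (pi + a))"
  shows "cmod (sector_power \<theta> z) = r powr (pi / (2 * \<theta>))"
    and "Re (sector_power \<theta> z) = r powr (pi / (2 * \<theta>)) * cos (pi / (2 * \<theta>) * a)"
proof -
  define p where "p = pi / (2 * \<theta>)"
  have "Ln (-z) = Complex (ln r) a"
    unfolding z using assms by (intro Ln_minus_polar) auto
  moreover have "complex_of_real p * Complex (ln r) a = Complex (p * ln r) (p * a)"
    by (simp add: complex_eq_iff)
  ultimately have "sector_power \<theta> z = exp (Complex (p * ln r) (p * a))"
    by (simp add: sector_power_def p_def[symmetric])
  then show "cmod (sector_power \<theta> z) = r powr (pi / (2 * \<theta>))"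
    and "Re (sector_power \<theta> z) = r powr (pi / (2 * \<theta>)) * cos (pi / (2 * \<theta>) * a)"
    using assms by (simp_all add: Re_exp powr_def p_def mult.commute)
qed

lemma Re_sector_power_pos:
  assumes "0 < \<theta>" "\<theta> < pi" "x \<in> sector \<theta>"
  shows "Re (sector_power \<theta> x) > 0"
  using assms cos_sector_angle_pos[of \<theta> "Im (Ln (-x))"]
  by (simp add: sector_power_def Re_exp mem_sector_iff)

lemma sector_power_has_field_derivative:
  assumes "-x \<notin> \<real>\<^sub>\<le>\<^sub>0"
  shows "(sector_power \<theta> has_field_derivative
           sector_power \<theta> x * complex_of_real (pi / (2 * \<theta>)) / x) (at x)"
proof -
  have "x \<noteq> 0" using assms by auto
  have "((\<lambda>x. Ln (-x)) has_field_derivative - inverse (-x)) (at x)"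
    by (rule DERIV_chain2[where f = Ln and g = uminus, OF has_field_derivative_Ln[OF assms],
          THEN DERIV_cong]) (auto intro!: derivative_eq_intros)
  from DERIV_chain2[OF DERIV_exp DERIV_cmult[OF this]]
  show ?thesis
    unfolding sector_power_def
    by (rule DERIV_cong) (use \<open>x \<noteq> 0\<close> in \<open>simp add: field_simps\<close>)
qed

lemma sector_power_holomorphic_on:
  assumes "0 < \<theta>" "\<theta> < pi" "D \<subseteq> sector \<theta>" "open D"
  shows "sector_power \<theta> holomorphic_on D"
  using assms minus_sector_notin_nonpos_Reals sector_power_has_field_derivative
  by (subst holomorphic_on_open) blast+

lemma sector_root_mem_sector:
  assumes "0 < \<theta>" "\<theta> < pi" "Re w > 0"
  shows "sector_root \<theta> w \<in> sector \<theta>"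
proof -
  define p where "p = pi / (2 * \<theta>)"
  have "p > 0" using assms by (simp add: p_def)
  have "\<bar>Im (Ln w)\<bar> / p < (pi / 2) / p"
    using assms \<open>p > 0\<close> by (intro divide_strict_right_mono Re_Ln_pos_lt_imp)
  then have Im: "\<bar>Im (Ln w / complex_of_real p)\<bar> < \<theta>"
    using assms \<open>p > 0\<close> by (simp add: p_def abs_div abs_mult)
  have "Ln (- sector_root \<theta> w) = Ln w / complex_of_real p"
    using Im assms unfolding sector_root_def p_def[symmetric] minus_minus
    by (intro Ln_exp) arith+
  with Im show ?thesis
    using assms by (simp add: mem_sector_iff sector_root_def)
qed

lemma norm_sector_root:
  assumes "w \<noteq> 0"
  shows "cmod (sector_root \<theta> w) = cmod w powr (2 * \<theta> / pi)"
  using assms by (simp add: sector_root_def powr_def)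

lemma sector_root_sector_power:
  assumes "0 < \<theta>" "\<theta> < pi" "x \<in> sector \<theta>"
  shows "sector_root \<theta> (sector_power \<theta> x) = x"
proof -
  define p where "p = pi / (2 * \<theta>)"
  have "p > 0" using assms by (simp add: p_def)
  have "x \<noteq> 0" "\<bar>Im (Ln (-x))\<bar> < \<theta>"
    using assms by (auto simp: mem_sector_iff)
  then have "\<bar>p * Im (Ln (-x))\<bar> < pi / 2"
    using assms \<open>p > 0\<close> by (simp add: p_def abs_mult field_simps)
  then have "Ln (sector_power \<theta> x) = complex_of_real p * Ln (-x)"
    unfolding sector_power_def p_def[symmetric] by (intro Ln_exp) auto
  with \<open>p > 0\<close> \<open>x \<noteq> 0\<close> show ?thesis
    by (simp add: sector_root_def p_def[symmetric])
qed

lemma sector_root_has_field_derivative: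
  assumes "Re w > 0"
  shows "(sector_root \<theta> has_field_derivative
           sector_root \<theta> w / (complex_of_real (pi / (2 * \<theta>)) * w)) (at w)"
proof -
  have "w \<notin> \<real>\<^sub>\<le>\<^sub>0" "w \<noteq> 0"
    using assms by (auto simp: complex_nonpos_Reals_iff)
  from DERIV_minus[OF DERIV_chain2[OF DERIV_exp DERIV_cdivide[OF has_field_derivative_Ln[OF this(1)]]]]
  show ?thesis
    unfolding sector_root_def
    by (rule DERIV_cong) (use \<open>w \<noteq> 0\<close> in \<open>simp add: field_simps\<close>)
qed

lemma Re_pos_if_mem_ball_of_real_self:
  assumes "w \<in> ball (complex_of_real t) t"
  shows "Re w > 0"
  using assms abs_Re_le_cmod[of "w - t"] by (simp add: dist_norm norm_minus_commute)

lemma sector_root_holomorphic_on: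
  assumes "open S" "\<And>w. w \<in> S \<Longrightarrow> Re w > 0"
  shows "sector_root \<theta> holomorphic_on S"
  using assms sector_root_has_field_derivative by (subst holomorphic_on_open) blast+

lemma sector_root_ball_subset_trunc_sector:
  assumes "0 < \<theta>" "\<theta> < pi" "\<epsilon> > 0"
    and t: "t = \<epsilon> powr (pi / (2 * \<theta>)) / 2"
  shows "sector_root \<theta> ` ball (complex_of_real t) t \<subseteq> trunc_sector \<theta> \<epsilon>"
proof safe
  fix w assume w: "w \<in> ball (complex_of_real t) t"
  then have "w \<noteq> 0" "cmod w < \<epsilon> powr (pi / (2 * \<theta>))"
    using Re_pos_if_mem_ball_of_real_self[OF w] norm_triangle_ineq[of "w - t" t]
    by (auto simp: dist_norm norm_minus_commute t)
  then have "cmod (sector_root \<theta> w) = cmod w powr (2 * \<theta> / pi)"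
    by (intro norm_sector_root)
  also have "\<dots> < (\<epsilon> powr (pi / (2 * \<theta>))) powr (2 * \<theta> / pi)"
    using \<open>cmod w < \<epsilon> powr (pi / (2 * \<theta>))\<close> assms by (intro powr_less_mono2) auto
  also have "\<dots> = \<epsilon>" using assms by (simp add: powr_powr)
  finally show "sector_root \<theta> w \<in> trunc_sector \<theta> \<epsilon>"
    using sector_root_mem_sector[OF assms(1,2) Re_pos_if_mem_ball_of_real_self[OF w]]
    by (simp add: trunc_sector_def)
qed

section \<open>Competitors for the Caratheodory and Eisenman-Kobayashi measures\<close>

lemma Schwarz_norm_deriv_comp_le_1:
  assumes "open D" and f: "f holomorphic_on D" "f ` D \<subseteq> ball 0 1" "f z = 0"
    and g: "g holomorphic_on ball 0 1" "g ` ball 0 1 \<subseteq> D" "g 0 = z"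
  shows "cmod (deriv f z) * cmod (deriv g 0) \<le> 1"
proof -
  have "z \<in> D" using g by force
  have "norm (deriv (f \<circ> g) 0) \<le> 1"
  proof (rule Schwarz_Lemma(2)[where \<xi> = 0])
    show "f \<circ> g holomorphic_on ball 0 1"
      using f g by (intro holomorphic_on_compose_gen)
    show "norm ((f \<circ> g) w) < 1" if "norm w < 1" for w
      using that f g by force
  qed (use g f in auto)
  moreover have "deriv (f \<circ> g) 0 = deriv f z * deriv g 0"
    using f g \<open>z \<in> D\<close> \<open>open D\<close>
    by (metis deriv_chain holomorphic_on_imp_differentiable_at centre_in_ball open_ball zero_less_one)
  ultimately show ?thesis by (simp add: norm_mult)
qed

lemma Car_EK_measure_bounds:
  assumes "open D" and f: "f holomorphic_on D" "f ` D \<subseteq> ball 0 1" "f z = 0"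
    and g: "g holomorphic_on ball 0 1" "g ` ball 0 1 \<subseteq> D" "g 0 = z" "deriv g 0 \<noteq> 0"
  shows "(cmod (deriv f z))^2 \<le> Car_measure D z"
    and "Car_measure D z \<le> EK_measure D z"
    and "EK_measure D z \<le> cmod (deriv g 0) powi (-2)"
proof -
  define C where "C = {(cmod (deriv f z))^2 | f. f holomorphic_on D \<and> f ` D \<subseteq> ball 0 1 \<and> f z = 0}"
  define E where "E = {(cmod (deriv g 0)) powi (-2) | g.
       g holomorphic_on ball 0 1 \<and> g ` ball 0 1 \<subseteq> D \<and> g 0 = z \<and> deriv g 0 \<noteq> 0}"
  have fC: "(cmod (deriv f z))^2 \<in> C" and gE: "cmod (deriv g 0) powi (-2) \<in> E"
    unfolding C_def E_def using f g by blast+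
  have C_le_E: "x \<le> y" if "x \<in> C" "y \<in> E" for x y
  proof -
    obtain f' where x: "x = (cmod (deriv f' z))^2"
      and f': "f' holomorphic_on D" "f' ` D \<subseteq> ball 0 1" "f' z = 0"
      using \<open>x \<in> C\<close> unfolding C_def by blast
    obtain g' where y: "y = cmod (deriv g' 0) powi (-2)"
      and g': "g' holomorphic_on ball 0 1" "g' ` ball 0 1 \<subseteq> D" "g' 0 = z" "deriv g' 0 \<noteq> 0"
      using \<open>y \<in> E\<close> unfolding E_def by blast
    have "cmod (deriv f' z) \<le> 1 / cmod (deriv g' 0)"
      using Schwarz_norm_deriv_comp_le_1[OF \<open>open D\<close> f' g'(1-3)] g'(4)
      by (simp add: le_divide_eq)
    then have "(cmod (deriv f' z))^2 \<le> (1 / cmod (deriv g' 0))^2"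
      by (rule power_mono) simp
    then show ?thesis
      unfolding x y by (simp add: power_int_minus power_one_over inverse_eq_divide)
  qed
  have "bdd_above C" using C_le_E gE by (auto simp: bdd_above_def)
  moreover have "bdd_below E"
    unfolding E_def bdd_below_def by (intro exI[of _ 0]) auto
  ultimately show "(cmod (deriv f z))^2 \<le> Car_measure D z"
    and "Car_measure D z \<le> EK_measure D z"
    and "EK_measure D z \<le> cmod (deriv g 0) powi (-2)"
    using fC gE C_le_E unfolding Car_measure_def EK_measure_def C_def[symmetric] E_def[symmetric]
    by (auto intro: cSup_upper cInf_lower cSup_least cInf_greatest)
qed

lemma norm_diff_lt_norm_add_cnj:
  fixes u v :: complex
  assumes "Re u > 0" "Re v > 0"
  shows "cmod (u - v) < cmod (u + cnj v)"
proof -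
  have "(cmod (u - v))^2 < (cmod (u + cnj v))^2"
    using mult_pos_pos[OF assms] unfolding cmod_power2 by (simp add: power2_eq_square algebra_simps)
  then show ?thesis by (rule power2_less_imp_less) simp
qed

lemma Car_witness_from_half_plane_map:
  assumes "open D" "P holomorphic_on D" "\<And>x. x \<in> D \<Longrightarrow> Re (P x) > 0" "z \<in> D"
  obtains f where "f holomorphic_on D" "f ` D \<subseteq> ball 0 1" "f z = 0"
    "cmod (deriv f z) = cmod (deriv P z) / (2 * Re (P z))"
proof
  define f where "f x = (P x - P z) / (P x + cnj (P z))" for x
  have den: "P x + cnj (P z) \<noteq> 0" if "x \<in> D" for x
    using assms(3)[OF that] assms(3)[OF \<open>z \<in> D\<close>] by (auto simp: complex_eq_iff)
  show "f holomorphic_on D"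
    unfolding f_def using assms(2) den by (intro holomorphic_intros)
  show "f ` D \<subseteq> ball 0 1"
    using assms(3) \<open>z \<in> D\<close> den norm_diff_lt_norm_add_cnj
    by (auto simp: f_def norm_divide divide_less_eq)
  show "f z = 0" by (simp add: f_def)
  have dP: "(P has_field_derivative deriv P z) (at z)"
    using holomorphic_derivI[OF assms(2,1,4)] .
  have "(f has_field_derivative deriv P z / (P z + cnj (P z))) (at z)"
    unfolding f_def
    by (rule DERIV_cong[OF DERIV_divide[OF DERIV_diff[OF dP DERIV_const] DERIV_add[OF dP DERIV_const]
          den[OF \<open>z \<in> D\<close>]]]) (use den[OF \<open>z \<in> D\<close>] in simp)
  then have "deriv f z = deriv P z / complex_of_real (2 * Re (P z))"
    by (simp add: DERIV_imp_deriv complex_add_cnj)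
  then show "cmod (deriv f z) = cmod (deriv P z) / (2 * Re (P z))"
    using assms(3)[OF \<open>z \<in> D\<close>] by (simp add: norm_divide)
qed

lemma ball_map_through_point:
  assumes "w0 \<in> ball c R"
  obtains h where "h holomorphic_on ball 0 1" "h ` ball 0 1 \<subseteq> ball c R" "h 0 = w0"
    "deriv h 0 = complex_of_real ((R^2 - (cmod (w0 - c))^2) / R)"
proof
  have "R > 0" using assms by (simp add: dist_norm) (meson norm_ge_zero le_less_trans)
  define b where "b = (w0 - c) / R"
  have "cmod b < 1"
    using assms \<open>R > 0\<close> by (simp add: b_def dist_norm norm_minus_commute norm_divide)
  define h where "h w = c + R * Moebius_function 0 (-b) w" for w
  show "h holomorphic_on ball 0 1"
    unfolding h_def using \<open>cmod b < 1\<close> by (intro holomorphic_intros Moebius_function_holomorphic) auto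
  show "h ` ball 0 1 \<subseteq> ball c R"
    using Moebius_function_norm_lt_1[of "-b"] \<open>cmod b < 1\<close> \<open>R > 0\<close>
    by (auto simp: h_def dist_norm norm_mult)
  show "h 0 = w0"
    using \<open>R > 0\<close> by (simp add: h_def b_def Moebius_function_of_zero)
  have "(h has_field_derivative R * (1 - b * cnj b)) (at 0)"
    unfolding h_def Moebius_function_simple
    by (auto intro!: derivative_eq_intros simp: algebra_simps)
  moreover have "b * cnj b = complex_of_real ((cmod (w0 - c) / R)^2)"
    unfolding complex_norm_square[symmetric] using \<open>R > 0\<close> by (simp add: b_def norm_divide)
  then have "R * (1 - b * cnj b) = complex_of_real (R * (1 - (cmod (w0 - c) / R)^2))"
    by simp
  moreover have "R * (1 - (cmod (w0 - c) / R)^2) = (R^2 - (cmod (w0 - c))^2) / R"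
    using \<open>R > 0\<close> by (simp add: field_simps power2_eq_square)
  ultimately show "deriv h 0 = complex_of_real ((R^2 - (cmod (w0 - c))^2) / R)"
    by (simp add: DERIV_imp_deriv)
qed

lemma EK_witness_through_ball:
  assumes "Q holomorphic_on ball c R" "Q ` ball c R \<subseteq> D" "w0 \<in> ball c R"
  obtains g where "g holomorphic_on ball 0 1" "g ` ball 0 1 \<subseteq> D" "g 0 = Q w0"
    "deriv g 0 = deriv Q w0 * complex_of_real ((R^2 - (cmod (w0 - c))^2) / R)"
proof -
  obtain h where h: "h holomorphic_on ball 0 1" "h ` ball 0 1 \<subseteq> ball c R" "h 0 = w0"
    "deriv h 0 = complex_of_real ((R^2 - (cmod (w0 - c))^2) / R)"
    using ball_map_through_point[OF assms(3)] by blast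
  show thesis
  proof
    show "Q \<circ> h holomorphic_on ball 0 1"
      using h assms by (intro holomorphic_on_compose_gen)
    show "(Q \<circ> h) ` ball 0 1 \<subseteq> D" "(Q \<circ> h) 0 = Q w0"
      using h assms by auto
    have "deriv (Q \<circ> h) 0 = deriv Q (h 0) * deriv h 0"
      using h assms by (intro deriv_chain holomorphic_on_imp_differentiable_at) auto
    then show "deriv (Q \<circ> h) 0 = deriv Q w0 * complex_of_real ((R^2 - (cmod (w0 - c))^2) / R)"
      using h by simp
  qed
qed

section \<open>Truncated sectors near the vertex\<close>

text \<open>The common value of both measures of the full sector Gamma_theta at
  r e^(i (pi + a)).\<close>

definition sector_measure :: "real \<Rightarrow> real \<Rightarrow> real \<Rightarrow> real" where
  "sector_measure \<theta> r a = (pi / (2 * \<theta>) / (2 * r * cos (pi / (2 * \<theta>) * a)))^2"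

lemma trunc_sector_Car_witness:
  assumes "0 < \<theta>" "\<theta> < pi" "r > 0" "\<bar>a\<bar> < \<theta>"
    and z: "z = complex_of_real r * exp (\<i> * complex_of_real (pi + a))" "z \<in> trunc_sector \<theta> \<epsilon>"
  obtains f where "f holomorphic_on trunc_sector \<theta> \<epsilon>" "f ` trunc_sector \<theta> \<epsilon> \<subseteq> ball 0 1" "f z = 0"
    "(cmod (deriv f z))^2 = sector_measure \<theta> r a"
proof -
  define p where "p = pi / (2 * \<theta>)"
  have "p > 0" using assms by (simp add: p_def)
  have D: "open (trunc_sector \<theta> \<epsilon>)" "trunc_sector \<theta> \<epsilon> \<subseteq> sector \<theta>"
    using open_trunc_sector[OF assms(1,2)] by (auto simp: trunc_sector_def)
  obtain f where f: "f holomorphic_on trunc_sector \<theta> \<epsilon>" "f ` trunc_sector \<theta> \<epsilon> \<subseteq> ball 0 1" "f z = 0"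
    "cmod (deriv f z) = cmod (deriv (sector_power \<theta>) z) / (2 * Re (sector_power \<theta> z))"
    using Car_witness_from_half_plane_map[OF D(1) sector_power_holomorphic_on[OF assms(1,2) D(2,1)]]
      Re_sector_power_pos[OF assms(1,2)] D(2) z(2) by blast
  have "deriv (sector_power \<theta>) z = sector_power \<theta> z * complex_of_real p / z"
    using minus_sector_notin_nonpos_Reals[OF assms(1,2)] D(2) z(2) unfolding p_def
    by (blast intro: DERIV_imp_deriv sector_power_has_field_derivative)
  moreover have "cmod z = r" using z \<open>r > 0\<close> by (simp add: norm_mult)
  ultimately have "cmod (deriv f z) = p / (2 * r * cos (p * a))"
    using f(4) sector_power_polar[OF assms(1-4) z(1)] \<open>0 < \<theta>\<close> \<open>r > 0\<close>
    by (simp add: norm_mult norm_divide p_def)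
  then have "(cmod (deriv f z))^2 = sector_measure \<theta> r a"
    by (simp add: sector_measure_def p_def)
  with f that show thesis by blast
qed

lemma ball_map_deriv_at_sector_power_polar:
  assumes "0 < \<theta>" "\<theta> < pi" "r > 0" "\<bar>a\<bar> < \<theta>" "\<epsilon> > 0"
    and z: "z = complex_of_real r * exp (\<i> * complex_of_real (pi + a))"
    and t: "t = \<epsilon> powr (pi / (2 * \<theta>)) / 2"
  shows "(t^2 - (cmod (sector_power \<theta> z - t))^2) / t
    = 2 * r powr (pi / (2 * \<theta>)) * (cos (pi / (2 * \<theta>) * a) - (r / \<epsilon>) powr (pi / (2 * \<theta>)))"
proof -
  define p where "p = pi / (2 * \<theta>)"
  define w0 where "w0 = sector_power \<theta> z"
  have "t > 0" using assms by (simp add: t)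
  have w0: "cmod w0 = r powr p" "Re w0 = r powr p * cos (p * a)"
    using sector_power_polar[OF assms(1-4) z] by (simp_all add: w0_def p_def)
  have "(cmod (w0 - t))^2 = (Re w0 - t)^2 + (Im w0)^2"
    by (simp add: cmod_power2)
  also have "\<dots> = (cmod w0)^2 - 2 * t * Re w0 + t^2"
    unfolding cmod_power2 by (simp add: power2_eq_square algebra_simps)
  finally have dist: "(cmod (w0 - t))^2 = (r powr p)^2 - 2 * t * r powr p * cos (p * a) + t^2"
    using w0 by simp
  have "(t^2 - (cmod (w0 - t))^2) / t = 2 * r powr p * (cos (p * a) - r powr p / (2 * t))"
    using \<open>t > 0\<close> unfolding dist by (simp add: field_simps power2_eq_square)
  moreover have "r powr p / (2 * t) = (r / \<epsilon>) powr p"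
    using assms by (simp add: t p_def powr_divide)
  ultimately show ?thesis
    by (simp add: w0_def p_def)
qed

lemma trunc_sector_EK_witness:
  assumes "0 < \<theta>" "\<theta> < pi" "r > 0" "\<bar>a\<bar> < \<theta>" "\<epsilon> > 0"
    and z: "z = complex_of_real r * exp (\<i> * complex_of_real (pi + a))"
    and small: "(r / \<epsilon>) powr (pi / (2 * \<theta>)) < cos (pi / (2 * \<theta>) * a)"
  obtains g where "g holomorphic_on ball 0 1" "g ` ball 0 1 \<subseteq> trunc_sector \<theta> \<epsilon>" "g 0 = z"
    "cmod (deriv g 0) = 2 * r * (cos (pi / (2 * \<theta>) * a) - (r / \<epsilon>) powr (pi / (2 * \<theta>))) / (pi / (2 * \<theta>))"
proof -
  define p where "p = pi / (2 * \<theta>)"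
  define t where "t = \<epsilon> powr p / 2"
  define w0 where "w0 = sector_power \<theta> z"
  define d where "d = cos (p * a) - (r / \<epsilon>) powr p"
  have "p > 0" "t > 0" "d > 0" using assms by (simp_all add: p_def t_def d_def)
  have ball_deriv: "(t^2 - (cmod (w0 - t))^2) / t = 2 * r powr p * d"
    using ball_map_deriv_at_sector_power_polar[OF assms(1-6) t_def[unfolded p_def], folded p_def w0_def d_def] .
  then have "(cmod (w0 - t))^2 < t^2"
    using \<open>t > 0\<close> \<open>d > 0\<close> \<open>r > 0\<close> by (simp add: field_simps)
  then have "w0 \<in> ball (complex_of_real t) t"
    using \<open>t > 0\<close> by (simp add: dist_norm norm_minus_commute power2_less_imp_less)
  moreover have "sector_root \<theta> holomorphic_on ball (complex_of_real t) t"
    by (intro sector_root_holomorphic_on) (auto intro: Re_pos_if_mem_ball_of_real_self)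
  moreover note sector_root_ball_subset_trunc_sector[OF assms(1,2,5) t_def[unfolded p_def]]
  ultimately obtain g where g: "g holomorphic_on ball 0 1" "g ` ball 0 1 \<subseteq> trunc_sector \<theta> \<epsilon>"
    "g 0 = sector_root \<theta> w0"
    "deriv g 0 = deriv (sector_root \<theta>) w0 * complex_of_real ((t^2 - (cmod (w0 - t))^2) / t)"
    by (metis EK_witness_through_ball)
  have "sector_root \<theta> w0 = z"
    unfolding w0_def using assms polar_mem_sector by (intro sector_root_sector_power) auto
  moreover have "deriv (sector_root \<theta>) w0 = z / (complex_of_real p * w0)"
    using Re_pos_if_mem_ball_of_real_self[OF \<open>w0 \<in> ball (complex_of_real t) t\<close>] \<open>sector_root \<theta> w0 = z\<close>
    by (intro DERIV_imp_deriv) (metis p_def sector_root_has_field_derivative)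
  moreover have "cmod z = r" "cmod w0 = r powr p"
    using z sector_power_polar[OF assms(1-4) z] \<open>r > 0\<close> by (simp_all add: norm_mult w0_def p_def)
  ultimately have "cmod (deriv g 0) = 2 * r * d / p"
    using g(4) \<open>p > 0\<close> \<open>d > 0\<close> \<open>r > 0\<close> by (simp add: ball_deriv norm_mult norm_divide)
  with g \<open>sector_root \<theta> w0 = z\<close> that show thesis
    unfolding p_def d_def by metis
qed

lemma trunc_sector_measure_bounds:
  assumes "0 < \<theta>" "\<theta> < pi" "r > 0" "\<bar>a\<bar> < \<theta>" "\<epsilon> > 0"
    and z: "z = complex_of_real r * exp (\<i> * complex_of_real (pi + a))"
    and small: "(r / \<epsilon>) powr (pi / (2 * \<theta>)) < cos (pi / (2 * \<theta>) * a)"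
  shows "sector_measure \<theta> r a \<le> Car_measure (trunc_sector \<theta> \<epsilon>) z"
    and "Car_measure (trunc_sector \<theta> \<epsilon>) z \<le> EK_measure (trunc_sector \<theta> \<epsilon>) z"
    and "EK_measure (trunc_sector \<theta> \<epsilon>) z \<le> sector_measure \<theta> r a *
           (cos (pi / (2 * \<theta>) * a) / (cos (pi / (2 * \<theta>) * a) - (r / \<epsilon>) powr (pi / (2 * \<theta>))))^2"
proof -
  define p where "p = pi / (2 * \<theta>)"
  define c where "c = cos (p * a)"
  define \<delta> where "\<delta> = (r / \<epsilon>) powr p"
  have "p > 0" "c > 0" "c - \<delta> > 0"
    using assms cos_sector_angle_pos[OF assms(1,4)] by (simp_all add: p_def c_def \<delta>_def)
  obtain g where g: "g holomorphic_on ball 0 1" "g ` ball 0 1 \<subseteq> trunc_sector \<theta> \<epsilon>" "g 0 = z"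
      "cmod (deriv g 0) = 2 * r * (c - \<delta>) / p"
    using trunc_sector_EK_witness[OF assms] unfolding p_def c_def \<delta>_def by blast
  have "z \<in> trunc_sector \<theta> \<epsilon>" using g by force
  then obtain f where f: "f holomorphic_on trunc_sector \<theta> \<epsilon>" "f ` trunc_sector \<theta> \<epsilon> \<subseteq> ball 0 1"
      "f z = 0" "(cmod (deriv f z))^2 = sector_measure \<theta> r a"
    using trunc_sector_Car_witness[OF assms(1-4) z] by blast
  have "deriv g 0 \<noteq> 0"
    using g(4) \<open>p > 0\<close> \<open>c - \<delta> > 0\<close> \<open>r > 0\<close> by auto
  note bounds = Car_EK_measure_bounds[OF open_trunc_sector[OF assms(1,2)] f(1-3) g(1-3) this]
  have "cmod (deriv g 0) powi (-2) = (p / (2 * r * (c - \<delta>)))^2"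
    unfolding g(4) by (simp add: power_int_minus flip: power_inverse)
  also have "\<dots> = (p / (2 * r * c) * (c / (c - \<delta>)))^2"
    using \<open>c > 0\<close> by simp
  also have "\<dots> = sector_measure \<theta> r a * (c / (c - \<delta>))^2"
    unfolding sector_measure_def p_def[symmetric] c_def[symmetric] by (rule power_mult_distrib)
  finally have "cmod (deriv g 0) powi (-2) = sector_measure \<theta> r a * (c / (c - \<delta>))^2" .
  with bounds f(4) show "sector_measure \<theta> r a \<le> Car_measure (trunc_sector \<theta> \<epsilon>) z"
    and "Car_measure (trunc_sector \<theta> \<epsilon>) z \<le> EK_measure (trunc_sector \<theta> \<epsilon>) z"
    and "EK_measure (trunc_sector \<theta> \<epsilon>) z \<le> sector_measure \<theta> r a *
           (cos (pi / (2 * \<theta>) * a) / (cos (pi / (2 * \<theta>) * a) - (r / \<epsilon>) powr (pi / (2 * \<theta>))))^2"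
    by (simp_all add: p_def c_def \<delta>_def)
qed

lemma sector_measure_pos:
  assumes "0 < \<theta>" "r > 0" "\<bar>a\<bar> < \<theta>"
  shows "sector_measure \<theta> r a > 0"
  using assms cos_sector_angle_pos[OF assms(1,3)] by (simp add: sector_measure_def)

lemma tendsto_ratio_sandwich:
  fixes A B M q :: "'a \<Rightarrow> real"
  assumes "eventually (\<lambda>x. M x \<le> A x \<and> A x \<le> B x \<and> B x \<le> M x * q x) F"
    and "(q \<longlongrightarrow> 1) F" "\<And>x. M x > 0"
  shows "((\<lambda>x. A x / M x) \<longlongrightarrow> 1) F" and "((\<lambda>x. B x / M x) \<longlongrightarrow> 1) F"
proof -
  have bounds: "eventually (\<lambda>x. 1 \<le> A x / M x \<and> A x / M x \<le> B x / M x \<and> B x / M x \<le> q x) F"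
    using assms(1)
  proof eventually_elim
    case (elim x)
    with assms(3)[of x] show ?case
      by (simp add: le_divide_eq pos_divide_le_eq divide_right_mono mult.commute)
  qed
  show "((\<lambda>x. A x / M x) \<longlongrightarrow> 1) F" "((\<lambda>x. B x / M x) \<longlongrightarrow> 1) F"
    by (rule tendsto_sandwich[OF _ _ tendsto_const assms(2)]; use bounds in \<open>eventually_elim, auto\<close>)+
qed

lemma trunc_sector_measures_asymptotic:
  assumes "0 < \<theta>" "\<theta> < pi" "\<epsilon> > 0"
    and r: "\<And>j. r j > 0" and a: "\<And>j. \<bar>a j\<bar> < \<theta>"
    and z: "\<And>j. z j = complex_of_real (r j) * exp (\<i> * complex_of_real (pi + a j))"
    and r_lim: "r \<longlonglongrightarrow> 0" and "a \<longlonglongrightarrow> \<alpha>" "\<bar>\<alpha>\<bar> < \<theta>"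
  shows "(\<lambda>j. Car_measure (trunc_sector \<theta> \<epsilon>) (z j) / sector_measure \<theta> (r j) (a j)) \<longlonglongrightarrow> 1"
    and "(\<lambda>j. EK_measure (trunc_sector \<theta> \<epsilon>) (z j) / sector_measure \<theta> (r j) (a j)) \<longlonglongrightarrow> 1"
proof -
  define p where "p = pi / (2 * \<theta>)"
  define c where "c j = cos (p * a j)" for j
  define \<delta> where "\<delta> j = (r j / \<epsilon>) powr p" for j
  have "p > 0" using assms by (simp add: p_def)
  have "cos (p * \<alpha>) > 0"
    unfolding p_def using assms by (intro cos_sector_angle_pos)
  have c_lim: "c \<longlonglongrightarrow> cos (p * \<alpha>)"
    unfolding c_def using assms by (intro tendsto_intros)
  have \<delta>_lim: "\<delta> \<longlonglongrightarrow> 0"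
    unfolding \<delta>_def using \<open>p > 0\<close>
    by (intro tendsto_zero_powrI[OF tendsto_divide_zero[OF r_lim] tendsto_const])
      (use r \<open>\<epsilon> > 0\<close> in \<open>auto intro!: always_eventually less_imp_le\<close>)
  have "(\<lambda>j. (c j / (c j - \<delta> j))^2) \<longlonglongrightarrow> (cos (p * \<alpha>) / (cos (p * \<alpha>) - 0))^2"
    using \<open>cos (p * \<alpha>) > 0\<close> by (intro tendsto_intros c_lim \<delta>_lim) auto
  then have q_lim: "(\<lambda>j. (c j / (c j - \<delta> j))^2) \<longlonglongrightarrow> 1"
    using \<open>cos (p * \<alpha>) > 0\<close> by simp
  have "eventually (\<lambda>j. 0 < c j - \<delta> j) sequentially"
    using tendsto_diff[OF c_lim \<delta>_lim] \<open>cos (p * \<alpha>) > 0\<close> by (intro order_tendstoD(1)) auto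
  then have "eventually (\<lambda>j. sector_measure \<theta> (r j) (a j) \<le> Car_measure (trunc_sector \<theta> \<epsilon>) (z j)
      \<and> Car_measure (trunc_sector \<theta> \<epsilon>) (z j) \<le> EK_measure (trunc_sector \<theta> \<epsilon>) (z j)
      \<and> EK_measure (trunc_sector \<theta> \<epsilon>) (z j) \<le> sector_measure \<theta> (r j) (a j) * (c j / (c j - \<delta> j))^2)
      sequentially"
    by eventually_elim
      (use trunc_sector_measure_bounds[OF assms(1,2) r a assms(3) z] in \<open>simp add: c_def \<delta>_def p_def\<close>)
  from tendsto_ratio_sandwich[OF this q_lim sector_measure_pos[OF assms(1) r a]]
  show "(\<lambda>j. Car_measure (trunc_sector \<theta> \<epsilon>) (z j) / sector_measure \<theta> (r j) (a j)) \<longlonglongrightarrow> 1"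
    and "(\<lambda>j. EK_measure (trunc_sector \<theta> \<epsilon>) (z j) / sector_measure \<theta> (r j) (a j)) \<longlonglongrightarrow> 1" .
qed

lemma tendsto_divide_of_asymptotic:
  fixes A B c d :: "'a \<Rightarrow> 'b :: real_normed_field"
  assumes "((\<lambda>x. A x / c x) \<longlongrightarrow> 1) F" "((\<lambda>x. B x / d x) \<longlongrightarrow> 1) F"
    and "((\<lambda>x. c x / d x) \<longlongrightarrow> L) F" "\<And>x. c x \<noteq> 0" "\<And>x. d x \<noteq> 0"
  shows "((\<lambda>x. A x / B x) \<longlongrightarrow> L) F"
proof -
  have "((\<lambda>x. (A x / c x) / (B x / d x) * (c x / d x)) \<longlongrightarrow> 1 / 1 * L) F"
    using assms by (intro tendsto_intros) auto
  moreover have "(A x / c x) / (B x / d x) * (c x / d x) = A x / B x" for x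
    using assms(4,5)[of x] by (cases "B x = 0") (simp_all add: field_simps)
  ultimately show ?thesis by simp
qed

lemma tendsto_sector_measure_ratio:
  assumes "0 < \<theta>1" "\<theta>1 < \<theta>2" "\<And>j. r j > 0" "\<And>j. \<bar>a j\<bar> < \<theta>1"
    and "a \<longlonglongrightarrow> \<alpha>" "\<bar>\<alpha>\<bar> < \<theta>1"
  shows "(\<lambda>j. sector_measure \<theta>1 (r j) (a j) / sector_measure \<theta>2 (r j) (a j))
    \<longlonglongrightarrow> ((\<theta>2 * cos (\<alpha> * pi / (2 * \<theta>2))) / (\<theta>1 * cos (\<alpha> * pi / (2 * \<theta>1)))) ^ 2"
proof -
  have "sector_measure \<theta>1 (r j) (a j) / sector_measure \<theta>2 (r j) (a j)
      = ((\<theta>2 * cos (a j * pi / (2 * \<theta>2))) / (\<theta>1 * cos (a j * pi / (2 * \<theta>1)))) ^ 2" for j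
    using assms(1,2) assms(3,4)[of j] cos_sector_angle_pos[of \<theta>1 "a j"] cos_sector_angle_pos[of \<theta>2 "a j"]
    by (simp add: sector_measure_def field_simps power2_eq_square)
  moreover have "cos (\<alpha> * pi / (2 * \<theta>1)) > 0"
    using cos_sector_angle_pos[OF assms(1,6)] by (simp add: mult.commute)
  then have "(\<lambda>j. ((\<theta>2 * cos (a j * pi / (2 * \<theta>2))) / (\<theta>1 * cos (a j * pi / (2 * \<theta>1)))) ^ 2)
      \<longlonglongrightarrow> ((\<theta>2 * cos (\<alpha> * pi / (2 * \<theta>2))) / (\<theta>1 * cos (\<alpha> * pi / (2 * \<theta>1)))) ^ 2"
    using assms(1,2) by (intro tendsto_intros assms(5)) auto
  ultimately show ?thesis by simp
qed

theorem lemma2p2: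
  fixes \<theta>1 \<theta>2 \<alpha> \<epsilon>1 \<epsilon>2 :: real
    and r a :: "nat \<Rightarrow> real" and z :: "nat \<Rightarrow> complex"
  assumes "0 < \<theta>1" "\<theta>1 < \<theta>2" "\<theta>2 < pi"
    and "\<And>j. r j > 0" "\<And>j. - \<theta>1 < a j \<and> a j < \<theta>1"
    and "\<And>j. z j = complex_of_real (r j) * exp (\<i> * complex_of_real (pi + a j))"
    and "z \<longlonglongrightarrow> 0" "a \<longlonglongrightarrow> \<alpha>" "\<bar>\<alpha>\<bar> < \<theta>1"
    and "\<epsilon>1 > 0" "\<epsilon>2 > 0"
  shows "((\<lambda>j. EK_measure (trunc_sector \<theta>1 \<epsilon>1) (z j) / EK_measure (trunc_sector \<theta>2 \<epsilon>2) (z j))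
           \<longlonglongrightarrow> ((\<theta>2 * cos (\<alpha> * pi / (2 * \<theta>2))) / (\<theta>1 * cos (\<alpha> * pi / (2 * \<theta>1)))) ^ 2) \<and>
         ((\<lambda>j. Car_measure (trunc_sector \<theta>1 \<epsilon>1) (z j) / Car_measure (trunc_sector \<theta>2 \<epsilon>2) (z j))
           \<longlonglongrightarrow> ((\<theta>2 * cos (\<alpha> * pi / (2 * \<theta>2))) / (\<theta>1 * cos (\<alpha> * pi / (2 * \<theta>1)))) ^ 2)"
proof -
  have a1: "\<bar>a j\<bar> < \<theta>1" and a2: "\<bar>a j\<bar> < \<theta>2" for j
    using assms(2) assms(5)[of j] by auto
  have "\<theta>1 < pi" "0 < \<theta>2" "\<bar>\<alpha>\<bar> < \<theta>2" using assms(1,2,3,9) by auto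
  have "(\<lambda>j. cmod (z j)) \<longlonglongrightarrow> 0" using tendsto_norm_zero[OF assms(7)] .
  then have "r \<longlonglongrightarrow> 0" using assms(4,6) by (simp add: norm_mult abs_of_pos)
  note asymp1 = trunc_sector_measures_asymptotic[OF assms(1) \<open>\<theta>1 < pi\<close> assms(10,4) a1 assms(6)
      \<open>r \<longlonglongrightarrow> 0\<close> assms(8,9)]
  note asymp2 = trunc_sector_measures_asymptotic[OF \<open>0 < \<theta>2\<close> assms(3,11,4) a2 assms(6)
      \<open>r \<longlonglongrightarrow> 0\<close> assms(8) \<open>\<bar>\<alpha>\<bar> < \<theta>2\<close>]
  note ratio = tendsto_sector_measure_ratio[OF assms(1,2,4) a1 assms(8,9)]
  have nz: "sector_measure \<theta>1 (r j) (a j) \<noteq> 0" "sector_measure \<theta>2 (r j) (a j) \<noteq> 0" for j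
    using sector_measure_pos[OF assms(1,4) a1] sector_measure_pos[OF \<open>0 < \<theta>2\<close> assms(4) a2]
    by (metis less_irrefl)+
  show ?thesis
    using tendsto_divide_of_asymptotic[OF asymp1(2) asymp2(2) ratio nz]
      tendsto_divide_of_asymptotic[OF asymp1(1) asymp2(1) ratio nz] by blast
qed

end
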